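(* Let $k$ be a positive integer and suppose that $a/b$ and $x/y$ are adjacent vertices of $\mathcal F_k$. Then every neighbor of $a/b$ in $\mathcal F_k$ has the form $\frac{x+am}{y+bm}$ for some $m\in\mathbb Z$.
   Context: The vertex set $V$ consists of all reduced fractions $p/q$ with $p,q\in\mathbb Z$, $\gcd(p,q)=1$, together with $1/0$; here $p/q$ and $(-p)/(-q)$ denote the same vertex. For vertices define $d(p/q,a/b)=|pb-qa|$. The graph $\mathcal F_k$ has vertex set $V$, with an edge between $p/q$ and $a/b$ exactly when $d(p/q,a/b)=k$. *)

theory Defs
  imports Main
begin

text \<open>A vertex p/q is represented by an integer pair (p,q) with gcd(p,q)=1
  (this includes 1/0 and excludes (0,0)); the pairs (p,q) and (-p,-q)
  represent the same vertex.\<close>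

definition is_vertex :: "int \<times> int \<Rightarrow> bool" where
  "is_vertex P \<longleftrightarrow> coprime (fst P) (snd P)"

definition same_vertex :: "int \<times> int \<Rightarrow> int \<times> int \<Rightarrow> bool" where
  "same_vertex P Q \<longleftrightarrow> P = Q \<or> P = (- fst Q, - snd Q)"

definition fdist :: "int \<times> int \<Rightarrow> int \<times> int \<Rightarrow> int" where
  "fdist P Q = \<bar>fst P * snd Q - snd P * fst Q\<bar>"

definition adjF :: "int \<Rightarrow> int \<times> int \<Rightarrow> int \<times> int \<Rightarrow> bool" where
  "adjF k P Q \<longleftrightarrow> is_vertex P \<and> is_vertex Q \<and> fdist P Q = k"

end

theory Submission
  imports Defs
begin

text \<open>Two vertices u/v and x/y have the same signed distance a v - b u = a y - b x from
  a/b exactly when (u, v) - (x, y) is a multiple of (a, b); since d only fixes this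
  distance up to sign, every neighbour of a/b in F_k is, after choosing its sign
  representative, a translate of (x, y) by a multiple of (a, b).\<close>

text \<open>The multiplier is read off a Bezout relation s a + t b = 1 as
  m = s (u - x) + t (v - y).\<close>

lemma det_eq_imp_translate:
  fixes a b s t x y u v :: "'a::comm_ring_1"
  assumes bezout: "s * a + t * b = 1"
    and det_eq: "a * v - b * u = a * y - b * x"
  shows "\<exists>m. u = x + a * m \<and> v = y + b * m"
proof -
  define m where "m = s * (u - x) + t * (v - y)"
  have cross: "a * (v - y) = b * (u - x)"
    using det_eq by (simp add: algebra_simps)
  have "a * m = s * a * (u - x) + t * (a * (v - y))"
    by (simp add: m_def algebra_simps)
  also have "\<dots> = (s * a + t * b) * (u - x)"
    unfolding cross by (simp add: algebra_simps)
  finally have shift_u: "a * m = u - x"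
    using bezout by simp
  have "b * m = s * (b * (u - x)) + t * b * (v - y)"
    by (simp add: m_def algebra_simps)
  also have "\<dots> = (s * a + t * b) * (v - y)"
    unfolding cross[symmetric] by (simp add: algebra_simps)
  finally have shift_v: "b * m = v - y"
    using bezout by simp
  from shift_u shift_v show ?thesis
    by (intro exI[of _ m]) (simp add: algebra_simps)
qed

lemma coprime_det_eq_imp_translate:
  fixes a b x y u v :: int
  assumes "coprime a b" and "a * v - b * u = a * y - b * x"
  shows "\<exists>m. u = x + a * m \<and> v = y + b * m"
proof -
  obtain s t where "s * a + t * b = 1"
    using bezout_int[of a b] \<open>coprime a b\<close> by (auto simp: coprime_iff_gcd_eq_1)
  then show ?thesis
    using det_eq_imp_translate assms(2) by blast
qed

theorem lemma2p2:
  fixes k a b x y u v :: int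
  assumes "k > 0"
    and "adjF k (a, b) (x, y)"
    and "adjF k (a, b) (u, v)"
  shows "\<exists>m::int. same_vertex (u, v) (x + a * m, y + b * m)"
proof -
  have coprime: "coprime a b"
    and same_abs: "\<bar>a * v - b * u\<bar> = \<bar>a * y - b * x\<bar>"
    using assms(2,3) by (auto simp: adjF_def is_vertex_def fdist_def)
  consider "a * v - b * u = a * y - b * x" | "a * (- v) - b * (- u) = a * y - b * x"
    using same_abs by (auto simp: abs_eq_iff)
  then show ?thesis
  proof cases
    case 1
    then obtain m where "u = x + a * m" "v = y + b * m"
      using coprime_det_eq_imp_translate[OF coprime] by blast
    then show ?thesis
      by (auto simp: same_vertex_def)
  next
    case 2
    then obtain m where "- u = x + a * m" "- v = y + b * m"
      using coprime_det_eq_imp_translate[OF coprime] by blast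
    then show ?thesis
      by (intro exI[of _ m]) (simp add: same_vertex_def)
  qed
qed

end
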